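(* Let $\psi:[0,\infty)\to[0,\infty)$ be convex, nondecreasing, not identically zero, with $\psi(0)=0$, and for $L>0$ let $\Psi(z;L)=\exp\big(\frac{2}{L^2}\psi(Lz)\big)-1$. Suppose that for some $\tau>0$ and $L>0$ a random variable $Z$ satisfies $$P\Big(|Z|\ge \frac{\tau}{L}\,\psi^{-1}(L^2t/2)\Big)\le 2e^{-t}\quad\text{for all } t>0.$$ Then $\|Z\|_{\Psi(\cdot;\sqrt3L)}\le\sqrt3\,\tau$.
   Context: For $t>0$, $\psi^{-1}(t)$ is the unique $x\ge0$ with $\psi(x)=t$ (well defined since $\psi$ is continuous, unbounded and strictly increasing where positive). The Orlicz norm is $\|X\|_{\Psi}=\inf\{c>0:E\Psi(|X|/c)\le1\}$. *)

theory Defs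
  imports "HOL-Probability.Probability"
begin

definition psi_inv :: "(real \<Rightarrow> real) \<Rightarrow> real \<Rightarrow> real" where
  "psi_inv psi t = (THE x. x \<ge> 0 \<and> psi x = t)"

definition Psi_L :: "(real \<Rightarrow> real) \<Rightarrow> real \<Rightarrow> real \<Rightarrow> real" where
  "Psi_L psi L z = exp (2 / L^2 * psi (L * z)) - 1"

text \<open>Orlicz norm, valued in the extended reals (infimum of the empty set is infinity).
  The expectation is taken as a nonnegative Lebesgue integral.\<close>
definition orlicz_norm :: "'a measure \<Rightarrow> (real \<Rightarrow> real) \<Rightarrow> ('a \<Rightarrow> real) \<Rightarrow> ereal" where
  "orlicz_norm M Psi X =
     Inf {ereal c | c. c > 0 \<and> (\<integral>\<^sup>+ x. ennreal (Psi (\<bar>X x\<bar> / c)) \<partial>M) \<le> 1}"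

end

theory Submission
  imports Defs
begin

text \<open>Put \<open>W = 2 / L\<^sup>2 * \<psi> (L \<bar>Z\<bar> / \<tau>)\<close>. Since \<open>\<psi>\<close> is strictly increasing wherever it is
  positive, \<open>\<psi>\<^sup>-\<^sup>1 s \<le> y \<longleftrightarrow> s \<le> \<psi> y\<close>, so the hypothesis says exactly \<open>P(W \<ge> s) \<le> 2 e\<^sup>-\<^sup>s\<close>.
  The factors \<open>\<surd>3\<close> turn \<open>\<Psi>(\<bar>Z\<bar> / (\<surd>3 \<tau>); \<surd>3 L)\<close> into \<open>e\<^bsup>W/3\<^esup> - 1 = \<integral>\<^sub>0\<^sup>W e\<^bsup>s/3\<^esup>/3 ds\<close>, and by
  Fubini its expectation is at most \<open>\<integral>\<^sub>0\<^sup>\<infinity> (2/3) e\<^bsup>-2s/3\<^esup> ds = 1\<close>.\<close>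

lemma convex_on_le_scaled_zero:
  fixes f :: "real \<Rightarrow> real"
  assumes "convex_on {0..} f" "f 0 = 0" "0 \<le> a" "a \<le> b" "0 < b"
  shows "f a \<le> a / b * f b"
proof -
  have "f ((1 - a/b) *\<^sub>R 0 + (a/b) *\<^sub>R b) \<le> (1 - a/b) * f 0 + (a/b) * f b"
    by (rule convex_onD[OF assms(1)]) (use assms in auto)
  then show ?thesis using assms by simp
qed

lemma exp_minus_one_eq_nn_integral:
  fixes a w :: real
  assumes "0 < a" "0 \<le> w"
  shows "ennreal (exp (a * w) - 1) = (\<integral>\<^sup>+s. ennreal (a * exp (a * s)) * indicator {0..w} s \<partial>lborel)"
proof -
  have "((\<lambda>s. a * exp (a * s)) has_integral (exp (a * w) - exp (a * 0))) {0..w}"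
    by (intro fundamental_theorem_of_calculus)
       (use assms in \<open>auto simp: has_real_derivative_iff_has_vector_derivative[symmetric]
                        intro!: derivative_eq_intros\<close>)
  then have "((\<lambda>s. if s \<in> {0..w} then a * exp (a * s) else 0) has_integral (exp (a * w) - 1)) UNIV"
    by (simp only: has_integral_restrict_UNIV mult_zero_right exp_zero)
  then have "ennreal (exp (a * w) - 1) = (\<integral>\<^sup>+s. ennreal (if s \<in> {0..w} then a * exp (a * s) else 0) \<partial>lborel)"
    by (intro nn_integral_has_integral_lborel[symmetric]) (use assms in auto)
  also have "\<dots> = (\<integral>\<^sup>+s. ennreal (a * exp (a * s)) * indicator {0..w} s \<partial>lborel)"
    by (intro nn_integral_cong) (simp add: indicator_def)
  finally show ?thesis .
qed

lemma nn_integral_exp_neg_atLeast_0: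
  fixes b :: real
  assumes "0 < b"
  shows "(\<integral>\<^sup>+s\<in>{0..}. ennreal (exp (- b * s)) \<partial>lborel) = ennreal (1 / b)"
proof -
  have "((\<lambda>s. - exp (- b * s) / b) \<longlongrightarrow> - 0 / b) at_top"
    using assms by (intro tendsto_intros filterlim_compose[OF exp_at_bot]
        filterlim_tendsto_neg_mult_at_bot[OF tendsto_const _ filterlim_ident]) auto
  then have "(\<integral>\<^sup>+s\<in>{0..}. ennreal (exp (- b * s)) \<partial>lborel) = - 0 / b - (- exp (- b * 0) / b)"
    by (intro nn_integral_FTC_atLeast) (use assms in \<open>auto intro!: derivative_eq_intros\<close>)
  then show ?thesis by simp
qed

lemma (in sigma_finite_measure) nn_integral_exp_minus_one_layer_cake:
  fixes W :: "'a \<Rightarrow> real"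
  assumes [measurable]: "W \<in> borel_measurable M" and W_nonneg: "\<And>x. 0 \<le> W x" and "0 < a"
  shows "(\<integral>\<^sup>+x. ennreal (exp (a * W x) - 1) \<partial>M)
    = (\<integral>\<^sup>+s\<in>{0..}. ennreal (a * exp (a * s)) * emeasure M {x \<in> space M. s \<le> W x} \<partial>lborel)"
proof -
  interpret pair_sigma_finite M lborel
    by (simp add: pair_sigma_finite_def sigma_finite_measure_axioms lborel.sigma_finite_measure_axioms)
  have meas: "(\<lambda>(x, s). ennreal (a * exp (a * s)) * indicator {0..W x} s) \<in> borel_measurable (M \<Otimes>\<^sub>M lborel)"
    by (simp add: indicator_def split_beta')
  have inner: "(\<integral>\<^sup>+x. ennreal (a * exp (a * s)) * indicator {0..W x} s \<partial>M)
      = ennreal (a * exp (a * s)) * emeasure M {x \<in> space M. s \<le> W x} * indicator {0..} s" for s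
  proof (cases "0 \<le> s")
    case True
    have "(\<integral>\<^sup>+x. ennreal (a * exp (a * s)) * indicator {0..W x} s \<partial>M)
        = (\<integral>\<^sup>+x. ennreal (a * exp (a * s)) * indicator {x \<in> space M. s \<le> W x} x \<partial>M)"
      by (intro nn_integral_cong) (use True in \<open>simp add: indicator_def\<close>)
    also have "\<dots> = ennreal (a * exp (a * s)) * emeasure M {x \<in> space M. s \<le> W x}"
      by (intro nn_integral_cmult_indicator) measurable
    finally show ?thesis using True by simp
  qed simp
  have "(\<integral>\<^sup>+x. ennreal (exp (a * W x) - 1) \<partial>M)
      = (\<integral>\<^sup>+x. \<integral>\<^sup>+s. ennreal (a * exp (a * s)) * indicator {0..W x} s \<partial>lborel \<partial>M)"
    using W_nonneg \<open>0 < a\<close> by (simp add: exp_minus_one_eq_nn_integral)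
  also have "\<dots> = (\<integral>\<^sup>+s. \<integral>\<^sup>+x. ennreal (a * exp (a * s)) * indicator {0..W x} s \<partial>M \<partial>lborel)"
    using Fubini'[OF meas] by simp
  also have "\<dots> = (\<integral>\<^sup>+s\<in>{0..}. ennreal (a * exp (a * s)) * emeasure M {x \<in> space M. s \<le> W x} \<partial>lborel)"
    by (simp add: inner)
  finally show ?thesis .
qed

lemma (in prob_space) nn_integral_exp_minus_one_le_of_exponential_tail:
  fixes W :: "'a \<Rightarrow> real"
  assumes [measurable]: "W \<in> borel_measurable M" and W_nonneg: "\<And>x. 0 \<le> W x"
    and tail: "\<And>s. 0 < s \<Longrightarrow> prob {x \<in> space M. s \<le> W x} \<le> 2 * exp (- s)"
    and a: "0 < a" "a < 1"
  shows "(\<integral>\<^sup>+x. ennreal (exp (a * W x) - 1) \<partial>M) \<le> ennreal (2 * a / (1 - a))"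
proof -
  have "ennreal (a * exp (a * s)) * emeasure M {x \<in> space M. s \<le> W x}
      \<le> ennreal (2 * a) * ennreal (exp (- (1 - a) * s))" if "0 \<le> s" for s
  proof -
    have "prob {x \<in> space M. s \<le> W x} \<le> 2 * exp (- s)"
    proof (cases "s = 0")
      case True
      then show ?thesis by (simp add: order_trans[OF prob_le_1])
    qed (use tail \<open>0 \<le> s\<close> in auto)
    then have "a * exp (a * s) * prob {x \<in> space M. s \<le> W x} \<le> a * exp (a * s) * (2 * exp (- s))"
      using a by (intro mult_left_mono) auto
    also have "\<dots> = 2 * a * exp (- (1 - a) * s)"
      by (simp add: algebra_simps flip: exp_add)
    finally show ?thesis
      using a by (simp add: emeasure_eq_measure ennreal_mult'[symmetric] ennreal_leI)
  qed
  then have "(\<integral>\<^sup>+x. ennreal (exp (a * W x) - 1) \<partial>M)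
      \<le> (\<integral>\<^sup>+s\<in>{0..}. ennreal (2 * a) * ennreal (exp (- (1 - a) * s)) \<partial>lborel)"
    unfolding nn_integral_exp_minus_one_layer_cake[OF assms(1) W_nonneg a(1)]
    by (intro nn_integral_mono) (simp split: split_indicator)
  also have "\<dots> = ennreal (2 * a) * (\<integral>\<^sup>+s\<in>{0..}. ennreal (exp (- (1 - a) * s)) \<partial>lborel)"
    by (subst nn_integral_cmult[symmetric]) (auto simp: mult.assoc)
  also have "\<dots> = ennreal (2 * a) * ennreal (1 / (1 - a))"
    using a by (simp only: nn_integral_exp_neg_atLeast_0)
  also have "\<dots> = ennreal (2 * a / (1 - a))"
    using a by (simp add: ennreal_mult'[symmetric])
  finally show ?thesis .
qed

locale young_function =
  fixes psi :: "real \<Rightarrow> real"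
  assumes nonneg: "\<And>x. 0 \<le> x \<Longrightarrow> 0 \<le> psi x"
    and convex: "convex_on {0..} psi"
    and mono: "mono_on {0..} psi"
    and nontrivial: "\<exists>x\<ge>0. psi x \<noteq> 0"
    and zero: "psi 0 = 0"
begin

lemma le_scaled: "0 \<le> a \<Longrightarrow> a \<le> b \<Longrightarrow> 0 < b \<Longrightarrow> psi a \<le> a / b * psi b"
  by (rule convex_on_le_scaled_zero[OF convex zero])

lemma less_if_pos: "0 \<le> a \<Longrightarrow> a < b \<Longrightarrow> 0 < psi b \<Longrightarrow> psi a < psi b"
  using le_scaled[of a b] mult_strict_right_mono[of "a / b" 1 "psi b"] by simp

lemma obtain_pos:
  obtains x0 where "0 < x0" "0 < psi x0"
proof -
  obtain x0 where "0 \<le> x0" "psi x0 \<noteq> 0" using nontrivial by blast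
  with nonneg[of x0] zero have "0 < x0" "0 < psi x0" by (auto simp: less_le)
  then show ?thesis by (rule that)
qed

lemma surj_pos:
  assumes "0 < t"
  shows "\<exists>x\<ge>0. psi x = t"
proof -
  obtain x0 where x0: "0 < x0" "0 < psi x0" by (rule obtain_pos)
  define a where "a = min x0 (t * x0 / (2 * psi x0))"
  define b where "b = max x0 (t * x0 / psi x0)"
  have a: "0 < a" "a \<le> x0" using x0 assms by (auto simp: a_def)
  have b: "x0 \<le> b" by (simp add: b_def)
  have "psi a \<le> a / x0 * psi x0" using le_scaled a x0 by simp
  also have "\<dots> \<le> t / 2"
    using x0 mult_right_mono[of a "t * x0 / (2 * psi x0)" "psi x0 / x0"] by (simp add: a_def)
  finally have "psi a \<le> t" using assms by simp
  have "t \<le> b / x0 * psi x0"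
    using x0 mult_right_mono[of "t * x0 / psi x0" b "psi x0 / x0"] by (simp add: b_def)
  also have "\<dots> \<le> psi b" using le_scaled[of x0 b] x0 b by (simp add: field_simps)
  finally have "t \<le> psi b" .
  \<comment> \<open>\<open>a > 0\<close>: convexity gives continuity only on the open half-line\<close>
  have "continuous_on {0<..} psi"
    by (intro convex_on_continuous convex_on_subset[OF convex]) auto
  then have "continuous_on {a..b} psi"
    by (rule continuous_on_subset) (use a in auto)
  then obtain x where "a \<le> x" "psi x = t"
    using IVT'[of psi a t b] \<open>psi a \<le> t\<close> \<open>t \<le> psi b\<close> a b by auto
  then show ?thesis using a by (intro exI[of _ x]) auto
qed

lemma psi_inv:
  assumes "0 < t"
  shows "0 \<le> psi_inv psi t" "psi (psi_inv psi t) = t"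
proof -
  obtain x where x: "0 \<le> x" "psi x = t" using surj_pos[OF assms] by blast
  have unique: "z = x" if z: "0 \<le> z" "psi z = t" for z
  proof (cases z x rule: linorder_cases)
    case less
    then have "psi z < psi x" using less_if_pos[OF z(1) less] x assms by simp
    then show ?thesis using x z by simp
  next
    case greater
    then have "psi x < psi z" using less_if_pos[OF x(1) greater] z assms by simp
    then show ?thesis using x z by simp
  qed
  have "psi_inv psi t = x"
    unfolding psi_inv_def using x unique by (intro the_equality) blast+
  then show "0 \<le> psi_inv psi t" "psi (psi_inv psi t) = t" using x by simp_all
qed

lemma psi_inv_le_iff:
  assumes "0 < t" "0 \<le> y"
  shows "psi_inv psi t \<le> y \<longleftrightarrow> t \<le> psi y"
proof
  assume "psi_inv psi t \<le> y"
  then have "psi (psi_inv psi t) \<le> psi y"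
    using psi_inv(1)[OF assms(1)] assms(2) by (intro mono_onD[OF mono]) auto
  then show "t \<le> psi y" by (simp add: psi_inv(2)[OF assms(1)])
next
  assume "t \<le> psi y"
  show "psi_inv psi t \<le> y"
  proof (rule ccontr)
    assume "\<not> psi_inv psi t \<le> y"
    then have "psi y < psi (psi_inv psi t)"
      using assms by (intro less_if_pos) (simp_all add: psi_inv)
    with \<open>t \<le> psi y\<close> show False by (simp add: psi_inv(2)[OF assms(1)])
  qed
qed

lemma rescaled_le_iff_psi_inv_le:
  assumes "0 < s" "0 \<le> r" "0 < \<tau>" "0 < L"
  shows "s \<le> 2 / L^2 * psi (L * r / \<tau>) \<longleftrightarrow> \<tau> / L * psi_inv psi (L^2 * s / 2) \<le> r"
proof -
  have "s \<le> 2 / L^2 * psi (L * r / \<tau>) \<longleftrightarrow> L^2 * s / 2 \<le> psi (L * r / \<tau>)"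
    using assms by (simp add: field_simps)
  also have "\<dots> \<longleftrightarrow> psi_inv psi (L^2 * s / 2) \<le> L * r / \<tau>"
    using assms by (intro psi_inv_le_iff[symmetric]) auto
  also have "\<dots> \<longleftrightarrow> \<tau> / L * psi_inv psi (L^2 * s / 2) \<le> r"
    using assms by (simp add: field_simps)
  finally show ?thesis .
qed

lemma borel_measurable_comp_nonneg:
  assumes f: "f \<in> borel_measurable M" and f_nonneg: "\<And>x. 0 \<le> f x"
  shows "(\<lambda>x. psi (f x)) \<in> borel_measurable M"
proof -
  have "mono (\<lambda>y. psi (max 0 y))"
    by (intro monoI mono_onD[OF mono]) auto
  then have "(\<lambda>x. psi (max 0 (f x))) \<in> borel_measurable M"
    using measurable_compose[OF f borel_measurable_mono] by blast
  then show ?thesis using f_nonneg by (simp add: max_absorb2)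
qed

end

lemma orlicz_norm_le:
  assumes "0 < c" "(\<integral>\<^sup>+x. ennreal (Psi (\<bar>X x\<bar> / c)) \<partial>M) \<le> 1"
  shows "orlicz_norm M Psi X \<le> ereal c"
  unfolding orlicz_norm_def using assms by (auto intro!: Inf_lower)

theorem lemma17:
  fixes M :: "'a measure" and Z :: "'a \<Rightarrow> real" and psi :: "real \<Rightarrow> real"
    and \<tau> L :: real
  assumes "prob_space M"
    and "Z \<in> borel_measurable M"
    and "\<forall>x\<ge>0. psi x \<ge> 0"
    and "convex_on {0..} psi"
    and "mono_on {0..} psi"
    and "\<exists>x\<ge>0. psi x \<noteq> 0"
    and "psi 0 = 0"
    and "\<tau> > 0" and "L > 0"
    and "\<forall>t>0. measure M {x \<in> space M. \<bar>Z x\<bar> \<ge> \<tau> / L * psi_inv psi (L^2 * t / 2)}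
                \<le> 2 * exp (- t)"
  shows "orlicz_norm M (Psi_L psi (sqrt 3 * L)) Z \<le> ereal (sqrt 3 * \<tau>)"
proof -
  interpret prob_space M by fact
  interpret young_function psi by unfold_locales (use assms(3-7) in auto)
  note tau = \<open>\<tau> > 0\<close> and L = \<open>L > 0\<close>
  define W where "W x = 2 / L^2 * psi (L * \<bar>Z x\<bar> / \<tau>)" for x
  have W_nonneg: "0 \<le> W x" for x
    using nonneg tau L by (simp add: W_def)
  have W_meas: "W \<in> borel_measurable M"
    unfolding W_def using assms(2) tau L
    by (intro borel_measurable_times borel_measurable_const borel_measurable_comp_nonneg) auto
  have "s \<le> W x \<longleftrightarrow> \<tau> / L * psi_inv psi (L^2 * s / 2) \<le> \<bar>Z x\<bar>" if "0 < s" for s x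
    unfolding W_def using that tau L by (intro rescaled_le_iff_psi_inv_le) auto
  then have "prob {x \<in> space M. s \<le> W x} \<le> 2 * exp (- s)" if "0 < s" for s
    using assms(10) that by simp
  then have "(\<integral>\<^sup>+x. ennreal (exp (1/3 * W x) - 1) \<partial>M) \<le> ennreal (2 * (1/3) / (1 - 1/3))"
    by (intro nn_integral_exp_minus_one_le_of_exponential_tail W_meas W_nonneg) auto
  moreover have "Psi_L psi (sqrt 3 * L) (\<bar>Z x\<bar> / (sqrt 3 * \<tau>)) = exp (1/3 * W x) - 1" for x
    using tau by (simp add: Psi_L_def W_def power_mult_distrib)
  ultimately show ?thesis
    using tau by (intro orlicz_norm_le) auto
qed

end
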